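(* Let $A$ be a meet-semilattice and $\kappa$ a regular cardinal. The following are equivalent: (1) every $\kappa$-join in $\mathcal{DM} A$ is distributive; (2) $\mathcal{DM} A$ is a $\kappa$-frame; (3) $\mathcal{BL}_\kappa(\mathcal{DM} A)=\mathcal{DM} A$.
   Context: A meet-semilattice is a poset with all finite meets. $\mathcal{DM} A$ is the complete lattice of normal ideals of $A$ (downsets $N$ with $N=N^{u\ell}$, where ${}^u,{}^\ell$ denote upper and lower bounds). An existing join $\bigvee S$ is distributive if $a\wedge\bigvee S=\bigvee\{a\wedge s:s\in S\}$ for all $a$. A D-ideal is a downset containing $\bigvee S$ for each subset $S$ of it with distributive join; $\mathcal{BL} A$ is the frame of D-ideals, and every normal ideal is a D-ideal, so $\mathcal{DM} A\subseteq\mathcal{BL} A$ (with $\mathcal{BL}(\mathcal{DM} A)$ identified with $\mathcal{BL} A$). A $\kappa$-join is a join of fewer than $\kappa$ elements; a $\kappa$-frame is a meet-semilattice in which all $\kappa$-joins exist and are distributive. $\mathcal{BL}_\kappa(\mathcal{DM} A)$ denotes the sub-$\kappa$-frame of $\mathcal{BL} A$ generated by $\mathcal{DM} A$ (closure of $\mathcal{DM} A$ under finite meets and $\kappa$-joins computed in $\mathcal{BL} A$). *)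

theory Defs
  imports Main
begin

definition ubs :: "'b::order set \<Rightarrow> 'b set" where
  "ubs S = {x. \<forall>s\<in>S. s \<le> x}"

definition lbs :: "'b::order set \<Rightarrow> 'b set" where
  "lbs S = {x. \<forall>s\<in>S. x \<le> s}"

definition is_join :: "'b::order set \<Rightarrow> 'b set \<Rightarrow> 'b \<Rightarrow> bool" where
  "is_join P S j \<longleftrightarrow> j \<in> P \<and> (\<forall>s\<in>S. s \<le> j) \<and> (\<forall>u\<in>P. (\<forall>s\<in>S. s \<le> u) \<longrightarrow> j \<le> u)"

definition is_meet :: "'b::order set \<Rightarrow> 'b set \<Rightarrow> 'b \<Rightarrow> bool" where
  "is_meet P S m \<longleftrightarrow> m \<in> P \<and> (\<forall>s\<in>S. m \<le> s) \<and> (\<forall>u\<in>P. (\<forall>s\<in>S. u \<le> s) \<longrightarrow> u \<le> m)"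

definition meet_semilattice :: "'b::order set \<Rightarrow> bool" where
  "meet_semilattice P \<longleftrightarrow> (\<forall>F. F \<subseteq> P \<and> finite F \<longrightarrow> (\<exists>m. is_meet P F m))"

definition dist_join :: "'b::order set \<Rightarrow> 'b set \<Rightarrow> bool" where
  "dist_join P S \<longleftrightarrow> (\<exists>j. is_join P S j \<and>
     (\<forall>a\<in>P. \<forall>m. is_meet P {a, j} m \<longrightarrow>
        is_join P {x. \<exists>s\<in>S. is_meet P {a, s} x} m))"

definition kappa_frame :: "'b::order set \<Rightarrow> 'k rel \<Rightarrow> bool" where
  "kappa_frame P \<kappa> \<longleftrightarrow> meet_semilattice P \<and>
     (\<forall>S. S \<subseteq> P \<and> ordLess2 (card_of S) \<kappa> \<longrightarrow> (\<exists>j. is_join P S j) \<and> dist_join P S)"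

text \<open>Normal ideals of A (the type 'a): N = N^{ul}.\<close>
definition DM :: "'a::bounded_semilattice_inf_top set set" where
  "DM = {N. N = lbs (ubs N)}"

definition downset :: "'a::order set \<Rightarrow> bool" where
  "downset I \<longleftrightarrow> (\<forall>x y. y \<in> I \<and> x \<le> y \<longrightarrow> x \<in> I)"

definition D_ideal :: "'a::bounded_semilattice_inf_top set \<Rightarrow> bool" where
  "D_ideal I \<longleftrightarrow> downset I \<and>
     (\<forall>S j. S \<subseteq> I \<and> is_join UNIV S j \<and> dist_join UNIV S \<longrightarrow> j \<in> I)"

definition BL :: "'a::bounded_semilattice_inf_top set set" where
  "BL = {I. D_ideal I}"

text \<open>BL_kappa(DM A): the sub-kappa-frame of BL A generated by DM A, i.e. the closure of
  DM A under finite meets and kappa-joins, both computed in BL A.\<close>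
inductive_set BL_kappa_DM :: "'k rel \<Rightarrow> 'a::bounded_semilattice_inf_top set set"
  for \<kappa> :: "'k rel" where
  gen: "N \<in> DM \<Longrightarrow> N \<in> BL_kappa_DM \<kappa>"
| meet: "F \<in> Pow (BL_kappa_DM \<kappa>) \<Longrightarrow> finite F \<Longrightarrow> is_meet BL F m \<Longrightarrow> m \<in> BL_kappa_DM \<kappa>"
| join: "S \<in> Pow (BL_kappa_DM \<kappa>) \<Longrightarrow> ordLess2 (card_of S) \<kappa> \<Longrightarrow> is_join BL S j \<Longrightarrow> j \<in> BL_kappa_DM \<kappa>"
  monos Pow_mono

end

theory Submission
  imports Defs "HOL.Hull"
begin

text \<open>
  Meets in DM A and in BL A are intersections, while the join of a family S is
  (\<Union>S)^{ul} in DM A and the D-ideal hull of \<Union>S in BL A; moreover BL A is a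
  frame. If the join of S in DM A is distributive, then meeting it with the
  principal ideals {..x} shows that each x in (\<Union>S)^{ul} is the distributive
  join in A of {..x} \<inter> \<Union>S, so the two joins of S coincide. Hence a
  kappa-frame DM A is closed under the operations generating BL_kappa(DM A).
  Conversely, if BL_kappa(DM A) = DM A, the BL-join of a small family of normal
  ideals is a normal ideal, hence its DM-join, and it is distributive because
  BL A is a frame.
\<close>

lemma is_join_unique: "is_join P S j \<Longrightarrow> is_join P S j' \<Longrightarrow> j = j'"
  unfolding is_join_def by (meson order_antisym)

lemma is_meet_unique: "is_meet P S m \<Longrightarrow> is_meet P S m' \<Longrightarrow> m = m'"
  unfolding is_meet_def by (meson order_antisym)

lemma is_join_UNIV_iff: "is_join UNIV S j \<longleftrightarrow> j \<in> ubs S \<and> j \<in> lbs (ubs S)"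
  unfolding is_join_def ubs_def lbs_def by auto

lemma is_meet_UNIV_pair_iff: "is_meet UNIV {a, b} m \<longleftrightarrow> m = inf a (b::'a::semilattice_inf)"
  unfolding is_meet_def by (auto intro: order_antisym)

lemma dist_join_UNIV_iff:
  fixes S :: "'a::semilattice_inf set"
  shows "dist_join UNIV S \<longleftrightarrow> (\<exists>j. is_join UNIV S j \<and> (\<forall>a. is_join UNIV (inf a ` S) (inf a j)))"
proof -
  have "{x. \<exists>s\<in>S. is_meet UNIV {a, s} x} = inf a ` S" for a
    by (auto simp: is_meet_UNIV_pair_iff)
  then show ?thesis
    unfolding dist_join_def is_meet_UNIV_pair_iff by simp
qed

lemma dist_join_UNIV_is_join_inf:
  fixes S :: "'a::semilattice_inf set"
  assumes "dist_join UNIV S" and "is_join UNIV S j"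
  shows "is_join UNIV (inf a ` S) (inf a j)"
  using assms is_join_unique unfolding dist_join_UNIV_iff by blast

lemma dist_join_UNIV_image_inf:
  fixes S :: "'a::semilattice_inf set"
  assumes "dist_join UNIV S" and "is_join UNIV S j"
  shows "dist_join UNIV (inf y ` S)"
  unfolding dist_join_UNIV_iff
proof (intro exI conjI allI)
  show "is_join UNIV (inf y ` S) (inf y j)"
    using assms by (rule dist_join_UNIV_is_join_inf)
  fix a
  have "is_join UNIV (inf (inf a y) ` S) (inf (inf a y) j)"
    using assms by (rule dist_join_UNIV_is_join_inf)
  then show "is_join UNIV (inf a ` inf y ` S) (inf a (inf y j))"
    by (simp add: image_image inf_assoc)
qed

lemma is_join_sets_iff:
  "is_join P S c \<longleftrightarrow> c \<in> P \<and> \<Union>S \<subseteq> c \<and> (\<forall>u\<in>P. \<Union>S \<subseteq> u \<longrightarrow> c \<subseteq> u)"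
  unfolding is_join_def Sup_le_iff by (rule refl)

lemma is_meet_Inter: "\<Inter>F \<in> P \<Longrightarrow> is_meet P F (\<Inter>F)"
  unfolding is_meet_def by blast

lemma is_meet_pair_Int_iff: "a \<inter> b \<in> P \<Longrightarrow> is_meet P {a, b} m \<longleftrightarrow> m = a \<inter> b"
  unfolding is_meet_def by (auto simp: subset_antisym)

lemma dist_join_sets_iff:
  assumes Int_closed: "\<And>a b. a \<in> P \<Longrightarrow> b \<in> P \<Longrightarrow> a \<inter> b \<in> P" and "S \<subseteq> P"
  shows "dist_join P S \<longleftrightarrow> (\<exists>j. is_join P S j \<and> (\<forall>a\<in>P. is_join P ((\<inter>) a ` S) (a \<inter> j)))"
proof -
  have meets: "(\<forall>m. is_meet P {a, j} m \<longrightarrow> is_join P {x. \<exists>s\<in>S. is_meet P {a, s} x} m)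
      \<longleftrightarrow> is_join P ((\<inter>) a ` S) (a \<inter> j)" if "a \<in> P" and "is_join P S j" for a j
  proof -
    have "is_meet P {a, s} x \<longleftrightarrow> x = a \<inter> s" if "s \<in> S" for s x
      using \<open>a \<in> P\<close> that assms by (intro is_meet_pair_Int_iff) auto
    then have "{x. \<exists>s\<in>S. is_meet P {a, s} x} = (\<inter>) a ` S"
      by auto
    moreover have "is_meet P {a, j} m \<longleftrightarrow> m = a \<inter> j" for m
      using that Int_closed by (intro is_meet_pair_Int_iff) (simp add: is_join_def)
    ultimately show ?thesis
      by simp
  qed
  show ?thesis
    unfolding dist_join_def by (simp add: meets cong: conj_cong)
qed

section \<open>Downsets and normal ideals\<close>

lemma lbs_ubs_increasing: "X \<subseteq> lbs (ubs X)"
  unfolding lbs_def ubs_def by auto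

lemma lbs_ubs_mono: "X \<subseteq> Y \<Longrightarrow> lbs (ubs X) \<subseteq> lbs (ubs Y)"
  unfolding lbs_def ubs_def by auto

lemma lbs_ubs_in_DM: "lbs (ubs X) \<in> DM"
  unfolding DM_def lbs_def ubs_def by auto

lemma lbs_ubs_DM: "N \<in> DM \<Longrightarrow> lbs (ubs N) = N"
  unfolding DM_def by simp

lemma lbs_ubs_least: "X \<subseteq> N \<Longrightarrow> N \<in> DM \<Longrightarrow> lbs (ubs X) \<subseteq> N"
  using lbs_ubs_mono[of X N] by (simp add: lbs_ubs_DM)

lemma downset_lbs: "downset (lbs X)"
  unfolding downset_def lbs_def by (auto intro: order_trans)

lemma downsetD: "downset I \<Longrightarrow> y \<in> I \<Longrightarrow> x \<le> y \<Longrightarrow> x \<in> I"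
  unfolding downset_def by blast

lemma downset_Union: "(\<And>s. s \<in> S \<Longrightarrow> downset s) \<Longrightarrow> downset (\<Union>S)"
  unfolding downset_def by blast

lemma image_inf_atMost_Int:
  fixes X :: "'a::semilattice_inf set"
  assumes "downset X"
  shows "inf a ` ({..x} \<inter> X) = {..inf a x} \<inter> X"
proof
  show "inf a ` ({..x} \<inter> X) \<subseteq> {..inf a x} \<inter> X"
  proof
    fix z
    assume "z \<in> inf a ` ({..x} \<inter> X)"
    then obtain y where "y \<le> x" and "y \<in> X" and "z = inf a y"
      by auto
    then show "z \<in> {..inf a x} \<inter> X"
      using downsetD[OF assms \<open>y \<in> X\<close>] by (simp add: inf.coboundedI2 inf_mono)
  qed
  show "{..inf a x} \<inter> X \<subseteq> inf a ` ({..x} \<inter> X)"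
  proof
    fix z
    assume "z \<in> {..inf a x} \<inter> X"
    then have "z = inf a z" and "z \<in> {..x} \<inter> X"
      by (simp_all add: inf_absorb2)
    then show "z \<in> inf a ` ({..x} \<inter> X)"
      by (rule image_eqI)
  qed
qed

lemma downset_DM: "N \<in> DM \<Longrightarrow> downset N"
  using downset_lbs[of "ubs N"] by (simp add: lbs_ubs_DM)

lemma Inter_in_DM:
  assumes "F \<subseteq> DM"
  shows "\<Inter>F \<in> DM"
proof -
  have "lbs (ubs (\<Inter>F)) \<subseteq> N" if "N \<in> F" for N
    using that assms by (intro lbs_ubs_least) auto
  then show ?thesis
    unfolding DM_def using lbs_ubs_increasing by blast
qed

lemma Int_in_DM: "a \<in> DM \<Longrightarrow> b \<in> DM \<Longrightarrow> a \<inter> b \<in> DM"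
  using Inter_in_DM[of "{a, b}"] by simp

lemma atMost_in_DM: "{..p} \<in> DM"
proof -
  have "lbs (ubs {..p}) = {..p}"
    unfolding lbs_def ubs_def by auto
  then show ?thesis
    unfolding DM_def by simp
qed

lemma is_join_DM: "is_join DM S (lbs (ubs (\<Union>S)))"
  unfolding is_join_sets_iff by (simp add: lbs_ubs_in_DM lbs_ubs_increasing lbs_ubs_least)

lemma is_join_DM_iff: "is_join DM S j \<longleftrightarrow> j = lbs (ubs (\<Union>S))"
  by (metis is_join_DM is_join_unique)

lemma meet_semilattice_DM: "meet_semilattice DM"
  unfolding meet_semilattice_def by (auto intro: is_meet_Inter Inter_in_DM)

lemma dist_join_DM_iff:
  assumes "S \<subseteq> DM"
  shows "dist_join DM S \<longleftrightarrow> (\<forall>a\<in>DM. a \<inter> lbs (ubs (\<Union>S)) = lbs (ubs (a \<inter> \<Union>S)))"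
proof -
  have "\<Union>((\<inter>) a ` S) = a \<inter> \<Union>S" for a :: "'a set"
    by blast
  then show ?thesis
    using assms by (simp add: dist_join_sets_iff Int_in_DM is_join_DM_iff)
qed

lemma kappa_frame_DM_iff:
  "kappa_frame (DM :: 'a::bounded_semilattice_inf_top set set) \<kappa> \<longleftrightarrow>
    (\<forall>S. S \<subseteq> (DM :: 'a set set) \<and> ordLess2 (card_of S) \<kappa> \<longrightarrow> dist_join DM S)"
proof -
  have "\<exists>j. is_join DM S j" for S :: "'a set set"
    using is_join_DM by blast
  then show ?thesis
    unfolding kappa_frame_def using meet_semilattice_DM by auto
qed

section \<open>D-ideals\<close>

lemma D_idealI:
  assumes "downset I"
    and "\<And>S j. S \<subseteq> I \<Longrightarrow> is_join UNIV S j \<Longrightarrow> dist_join UNIV S \<Longrightarrow> j \<in> I"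
  shows "D_ideal I"
  using assms unfolding D_ideal_def by auto

lemma D_ideal_downset: "D_ideal I \<Longrightarrow> downset I"
  unfolding D_ideal_def by simp

lemma D_ideal_join_mem:
  "D_ideal I \<Longrightarrow> S \<subseteq> I \<Longrightarrow> is_join UNIV S j \<Longrightarrow> dist_join UNIV S \<Longrightarrow> j \<in> I"
  unfolding D_ideal_def by simp

lemma D_ideal_Inter:
  assumes "\<And>I. I \<in> \<I> \<Longrightarrow> D_ideal I"
  shows "D_ideal (\<Inter>\<I>)"
proof (rule D_idealI)
  show "downset (\<Inter>\<I>)"
    unfolding downset_def using assms D_ideal_downset downsetD by blast
  fix S j
  assume "S \<subseteq> \<Inter>\<I>" and "is_join UNIV S j" and "dist_join UNIV S"
  then show "j \<in> \<Inter>\<I>"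
    using assms D_ideal_join_mem by (simp add: le_Inf_iff Inter_iff) blast
qed

lemma D_ideal_hull: "D_ideal (D_ideal hull X)"
  by (rule hull_in) (simp add: D_ideal_Inter)

lemma D_ideal_DM: "N \<in> DM \<Longrightarrow> D_ideal N"
  by (intro D_idealI downset_DM) (auto simp: is_join_UNIV_iff dest: lbs_ubs_least)

lemma is_join_BL_hull: "is_join BL S (D_ideal hull \<Union>S)"
  unfolding is_join_sets_iff BL_def
  by (simp add: D_ideal_hull hull_subset hull_minimal)

lemma is_meet_BL_DM: "F \<subseteq> DM \<Longrightarrow> is_meet BL F (\<Inter>F)"
  unfolding BL_def by (intro is_meet_Inter) (simp add: D_ideal_DM Inter_in_DM)

lemma D_ideal_residual:
  assumes "D_ideal u"
  shows "D_ideal {x. \<forall>y\<in>a. inf x y \<in> u}"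
proof (rule D_idealI)
  have "inf x z \<in> u" if "\<forall>z\<in>a. inf y z \<in> u" and "x \<le> y" and "z \<in> a" for x y z
    using that downsetD[OF D_ideal_downset[OF assms]] by (meson inf_mono order_refl)
  then show "downset {x. \<forall>y\<in>a. inf x y \<in> u}"
    unfolding downset_def by blast
  fix T j
  assume T: "T \<subseteq> {x. \<forall>y\<in>a. inf x y \<in> u}" and j: "is_join UNIV T j" "dist_join UNIV T"
  have "inf y j \<in> u" if "y \<in> a" for y
  proof (rule D_ideal_join_mem[OF assms])
    show "inf y ` T \<subseteq> u"
      using T that by (auto simp: inf_commute)
    show "is_join UNIV (inf y ` T) (inf y j)"
      using j(2,1) by (rule dist_join_UNIV_is_join_inf)
    show "dist_join UNIV (inf y ` T)"
      using j(2,1) by (rule dist_join_UNIV_image_inf)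
  qed
  then show "j \<in> {x. \<forall>y\<in>a. inf x y \<in> u}"
    by (simp add: inf_commute)
qed

text \<open>The frame law of BL A.\<close>

lemma Int_D_ideal_hull_subset:
  assumes "downset a" and "downset X" and "D_ideal u" and "a \<inter> X \<subseteq> u"
  shows "a \<inter> (D_ideal hull X) \<subseteq> u"
proof -
  let ?K = "{x. \<forall>y\<in>a. inf x y \<in> u}"
  have "X \<subseteq> ?K"
    using assms(4) downsetD[OF assms(1)] downsetD[OF assms(2)] by auto
  then have K: "D_ideal hull X \<subseteq> ?K"
    using D_ideal_residual[OF assms(3)] by (rule hull_minimal)
  show ?thesis
  proof
    fix x
    assume "x \<in> a \<inter> (D_ideal hull X)"
    then have "inf x x \<in> u"
      using K by blast
    then show "x \<in> u"
      by simp
  qed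
qed

text \<open>By the hypothesis, x in X^{ul} is the join in A of {..x} \<inter> X, and meeting
  with a turns this family into {..inf a x} \<inter> X, whose join is inf a x.\<close>

lemma lbs_ubs_subset_D_ideal:
  assumes "downset X"
    and local_dist: "\<And>p. {..p} \<inter> lbs (ubs X) \<subseteq> lbs (ubs ({..p} \<inter> X))"
    and "D_ideal I" and "X \<subseteq> I"
  shows "lbs (ubs X) \<subseteq> I"
proof
  fix x
  assume x: "x \<in> lbs (ubs X)"
  have join: "is_join UNIV ({..p} \<inter> X) p" if "p \<le> x" for p
  proof -
    have "p \<in> lbs (ubs X)"
      using downsetD[OF downset_lbs x that] .
    then show ?thesis
      using local_dist[of p] by (auto simp: is_join_UNIV_iff ubs_def)
  qed
  have "dist_join UNIV ({..x} \<inter> X)"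
    unfolding dist_join_UNIV_iff
  proof (intro exI conjI allI)
    show "is_join UNIV ({..x} \<inter> X) x"
      by (rule join) simp
    fix a
    show "is_join UNIV (inf a ` ({..x} \<inter> X)) (inf a x)"
      unfolding image_inf_atMost_Int[OF assms(1)] by (rule join) simp
  qed
  moreover have "{..x} \<inter> X \<subseteq> I"
    using assms(4) by blast
  ultimately show "x \<in> I"
    using D_ideal_join_mem[OF assms(3)] join[of x] by simp
qed

section \<open>Comparing DM A with BL A\<close>

lemma D_ideal_hull_eq_lbs_ubs:
  assumes "S \<subseteq> DM" and "dist_join DM S"
  shows "D_ideal hull \<Union>S = lbs (ubs (\<Union>S))"
proof (rule hull_unique)
  show "\<Union>S \<subseteq> lbs (ubs (\<Union>S))"
    by (rule lbs_ubs_increasing)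
  show "D_ideal (lbs (ubs (\<Union>S)))"
    by (rule D_ideal_DM[OF lbs_ubs_in_DM])
  fix I
  assume "\<Union>S \<subseteq> I" and "D_ideal I"
  have "downset (\<Union>S)"
    using assms(1) by (blast intro: downset_Union downset_DM)
  moreover have "{..p} \<inter> lbs (ubs (\<Union>S)) \<subseteq> lbs (ubs ({..p} \<inter> \<Union>S))" for p
    using assms(2) atMost_in_DM unfolding dist_join_DM_iff[OF assms(1)] by blast
  ultimately show "lbs (ubs (\<Union>S)) \<subseteq> I"
    using \<open>D_ideal I\<close> \<open>\<Union>S \<subseteq> I\<close> by (rule lbs_ubs_subset_D_ideal)
qed

lemma BL_kappa_DM_subset_DM:
  assumes "kappa_frame (DM :: 'a::bounded_semilattice_inf_top set set) \<kappa>"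
  shows "BL_kappa_DM \<kappa> \<subseteq> (DM :: 'a set set)"
proof
  fix N :: "'a set"
  assume "N \<in> BL_kappa_DM \<kappa>"
  then show "N \<in> DM"
  proof (induction rule: BL_kappa_DM.induct)
    case (gen N)
    then show ?case .
  next
    case (meet F m)
    then have "F \<subseteq> DM"
      by blast
    then have "m = \<Inter>F"
      using is_meet_unique[OF \<open>is_meet BL F m\<close> is_meet_BL_DM] by blast
    then show ?case
      using Inter_in_DM[OF \<open>F \<subseteq> DM\<close>] by simp
  next
    case (join S j)
    then have "S \<subseteq> DM"
      by blast
    then have "dist_join DM S"
      using assms \<open>ordLess2 (card_of S) \<kappa>\<close> by (simp add: kappa_frame_DM_iff)
    have "j = D_ideal hull \<Union>S"
      using \<open>is_join BL S j\<close> is_join_BL_hull by (rule is_join_unique)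
    also have "\<dots> = lbs (ubs (\<Union>S))"
      using \<open>S \<subseteq> DM\<close> \<open>dist_join DM S\<close> by (rule D_ideal_hull_eq_lbs_ubs)
    finally show ?case
      using lbs_ubs_in_DM by simp
  qed
qed

lemma dist_join_DM_if_D_ideal_hull_in_DM:
  assumes S: "S \<subseteq> DM" and hull_DM: "D_ideal hull \<Union>S \<in> DM"
  shows "dist_join DM S"
proof -
  have hull_eq: "D_ideal hull \<Union>S = lbs (ubs (\<Union>S))"
  proof (rule subset_antisym)
    show "D_ideal hull \<Union>S \<subseteq> lbs (ubs (\<Union>S))"
      by (intro hull_minimal lbs_ubs_increasing D_ideal_DM lbs_ubs_in_DM)
    show "lbs (ubs (\<Union>S)) \<subseteq> D_ideal hull \<Union>S"
      by (intro lbs_ubs_least hull_subset hull_DM)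
  qed
  have "a \<inter> lbs (ubs (\<Union>S)) = lbs (ubs (a \<inter> \<Union>S))" if a: "a \<in> DM" for a
  proof (rule subset_antisym)
    have "downset (\<Union>S)"
      using S by (blast intro: downset_Union downset_DM)
    then show "a \<inter> lbs (ubs (\<Union>S)) \<subseteq> lbs (ubs (a \<inter> \<Union>S))"
      unfolding hull_eq[symmetric]
      by (rule Int_D_ideal_hull_subset[OF downset_DM[OF a] _ D_ideal_DM[OF lbs_ubs_in_DM]
            lbs_ubs_increasing])
    show "lbs (ubs (a \<inter> \<Union>S)) \<subseteq> a \<inter> lbs (ubs (\<Union>S))"
      using a lbs_ubs_increasing[of "\<Union>S"]
      by (intro lbs_ubs_least Int_in_DM lbs_ubs_in_DM) auto
  qed
  then show ?thesis
    using S by (simp add: dist_join_DM_iff)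
qed

theorem theorem4p4:
  fixes \<kappa> :: "'k rel"
  assumes "Card_order \<kappa>" and "infinite (Field \<kappa>)" and "regularCard \<kappa>"
  shows "((\<forall>S. S \<subseteq> (DM :: 'a::bounded_semilattice_inf_top set set) \<and> ordLess2 (card_of S) \<kappa>
             \<longrightarrow> dist_join DM S)
          \<longleftrightarrow> kappa_frame (DM :: 'a set set) \<kappa>)
       \<and> (kappa_frame (DM :: 'a set set) \<kappa> \<longleftrightarrow> BL_kappa_DM \<kappa> = (DM :: 'a set set))"
proof -
  have "kappa_frame (DM :: 'a set set) \<kappa> \<longleftrightarrow> BL_kappa_DM \<kappa> = (DM :: 'a set set)"
  proof
    assume "kappa_frame (DM :: 'a set set) \<kappa>"
    then show "BL_kappa_DM \<kappa> = (DM :: 'a set set)"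
      using BL_kappa_DM_subset_DM BL_kappa_DM.gen by blast
  next
    assume BL_kappa_eq: "BL_kappa_DM \<kappa> = (DM :: 'a set set)"
    have "dist_join DM S" if "S \<subseteq> DM" and "ordLess2 (card_of S) \<kappa>" for S :: "'a set set"
    proof (rule dist_join_DM_if_D_ideal_hull_in_DM[OF \<open>S \<subseteq> DM\<close>])
      have "S \<in> Pow (BL_kappa_DM \<kappa>)"
        using that(1) BL_kappa_eq by simp
      then show "D_ideal hull \<Union>S \<in> DM"
        using BL_kappa_DM.join[OF _ that(2) is_join_BL_hull] BL_kappa_eq by simp
    qed
    then show "kappa_frame (DM :: 'a set set) \<kappa>"
      by (simp add: kappa_frame_DM_iff)
  qed
  then show ?thesis
    by (simp add: kappa_frame_DM_iff)
qed

end
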